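(* Let $f:\mathbb{R}^N\to\mathbb{R}\cup\{\infty\}$, $f(x)=\|x\|_1$ for $x\in[-1,1]^N$ and $f(x)=\infty$ otherwise. Let $K_1,K_{-1}\subseteq[N]$ be disjoint, $x_{\pm1}=\mathbb{1}_{K_1}-\mathbb{1}_{K_{-1}}$, $k=|K_1\cup K_{-1}|$. Then $$\partial f(x_{\pm1})=\{s\in\mathbb{R}^N: s_i\ge1\ (i\in K_1),\ s_i\le -1\ (i\in K_{-1}),\ |s_i|\le 1\ (i\notin K_1\cup K_{-1})\},$$ and $$\delta(\mathcal{D}(f,x_{\pm1}))\le\Delta_{\pm\mathrm{ter}}(k):=\inf_{\tau\ge0}\Big[k\int_{-\infty}^{\tau}(u-\tau)^2\phi(u)\,du+2(N-k)\int_\tau^\infty(u-\tau)^2\phi(u)\,du\Big],$$ with $\phi(u)=(2\pi)^{-1/2}e^{-u^2/2}$.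
   Context: $\mathbb{1}_S$ has entries $1$ on $S$, $0$ elsewhere. Subdifferential: $\partial f(x_0)=\{s: f(y)-f(x_0)\ge\langle s,y-x_0\rangle\ \forall y\in\mathbb{R}^N\}$. Descent cone: $\mathcal{D}(f,x)=\bigcup_{\tau>0}\{y\in\mathbb{R}^N: f(x+\tau y)\le f(x)\}$. Statistical dimension of a closed convex cone $C$ (applied here to the closure of the descent cone): $\delta(C)=\mathbb{E}\|\pi_C(g)\|_2^2$, where $g$ is a standard normal vector in $\mathbb{R}^N$ and $\pi_C$ is the Euclidean projection onto $C$. *)

theory Defs
  imports "HOL-Probability.Probability"
begin

definition subdifferential :: "(real^'n \<Rightarrow> ereal) \<Rightarrow> real^'n \<Rightarrow> (real^'n) set" where
  "subdifferential f x0 = {s. \<forall>y. f y - f x0 \<ge> ereal (s \<bullet> (y - x0))}"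

definition descent_cone :: "(real^'n \<Rightarrow> ereal) \<Rightarrow> real^'n \<Rightarrow> (real^'n) set" where
  "descent_cone f x = (\<Union>\<tau>\<in>{0<..}. {y. f (x + \<tau> *\<^sub>R y) \<le> f x})"

definition stat_dim :: "(real^'n) set \<Rightarrow> real" where
  "stat_dim C = (\<integral>g. (\<Prod>i\<in>UNIV. std_normal_density (g $ i)) * (norm (closest_point C g))\<^sup>2 \<partial>lborel)"

definition l1_box :: "real^'n \<Rightarrow> ereal" where
  "l1_box x = (if (\<forall>i. \<bar>x $ i\<bar> \<le> 1) then ereal (\<Sum>i\<in>UNIV. \<bar>x $ i\<bar>) else \<infinity>)"

definition Delta_pm_ter :: "nat \<Rightarrow> nat \<Rightarrow> real" where
  "Delta_pm_ter N k = (INF \<tau>\<in>{0..}.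
      real k * (LBINT u:{..\<tau>}. (u - \<tau>)\<^sup>2 * std_normal_density u)
    + 2 * (real N - real k) * (LBINT u:{\<tau>..}. (u - \<tau>)\<^sup>2 * std_normal_density u))"

end

theory Submission
  imports Defs
begin

text \<open>
  Both parts are coordinatewise. A subgradient at the signed indicator x is tested by moving one
  coordinate of x inside [-1,1], which forces the sign conditions; conversely they give
  s_i (z_i - x_i) \<le> |z_i| - |x_i| on the box. For the statistical dimension, any s satisfying the
  same conditions scaled by \<tau> \<ge> 0 lies in the polar of the descent cone, and the projection of g
  onto a closed cone is no longer than g - s for every s in the polar. Choosing s as the
  coordinatewise clamp of g, the Gaussian expectation of |g - s|^2 splits into k one-sided and
  N - k two-sided one-dimensional integrals; minimising over \<tau> gives the bound.
\<close>

lemma zero_in_descent_cone: "0 \<in> descent_cone f x"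
  unfolding descent_cone_def by (auto intro: exI[of _ 1])

lemma cone_descent_cone: "cone (descent_cone f x)"
  unfolding cone_def
proof (intro ballI allI impI)
  fix y and c :: real
  assume y: "y \<in> descent_cone f x" and c: "0 \<le> c"
  show "c *\<^sub>R y \<in> descent_cone f x"
  proof (cases "c = 0")
    case True
    then show ?thesis by (simp add: zero_in_descent_cone)
  next
    case False
    obtain t where "0 < t" "f (x + t *\<^sub>R y) \<le> f x"
      using y unfolding descent_cone_def by auto
    moreover have "(t / c) *\<^sub>R (c *\<^sub>R y) = t *\<^sub>R y" using False by simp
    ultimately show ?thesis unfolding descent_cone_def using c False
      by (intro UN_I[of "t / c"]) auto
  qed
qed

lemma closure_descent_cone_polar:
  assumes "\<And>z. f z \<le> f x \<Longrightarrow> s \<bullet> (z - x) \<le> 0"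
    and "y \<in> closure (descent_cone f x)"
  shows "s \<bullet> y \<le> 0"
proof -
  have "descent_cone f x \<subseteq> {y. s \<bullet> y \<le> 0}"
  proof
    fix y assume "y \<in> descent_cone f x"
    then obtain t where t: "0 < t" "f (x + t *\<^sub>R y) \<le> f x"
      unfolding descent_cone_def by auto
    then have "t * (s \<bullet> y) \<le> 0" using assms(1)[of "x + t *\<^sub>R y"] by simp
    with t show "y \<in> {y. s \<bullet> y \<le> 0}" by (simp add: mult_le_0_iff)
  qed
  then have "closure (descent_cone f x) \<subseteq> {y. s \<bullet> y \<le> 0}"
    by (rule closure_minimal) (rule closed_halfspace_le)
  then show ?thesis using assms(2) by auto
qed

lemma closest_point_cone_inner_le:
  fixes C :: "'a::{real_inner,heine_borel} set" and g :: 'a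
  assumes "closed C" "C \<noteq> {}" "cone C"
  defines "p \<equiv> closest_point C g"
  shows "p \<bullet> p \<le> g \<bullet> p"
proof (rule ccontr)
  assume "\<not> p \<bullet> p \<le> g \<bullet> p"
  define a b where "a = p \<bullet> p" and "b = g \<bullet> p"
  have "b < a" using \<open>\<not> p \<bullet> p \<le> g \<bullet> p\<close> by (simp add: a_def b_def)
  have "p \<in> C" unfolding p_def using assms(1,2) by (rule closest_point_in_set)
  \<comment> \<open>p minimises the distance to g along the ray through p, a quadratic in the scale\<close>
  have ray: "- 2 * b + a \<le> - 2 * t * b + t\<^sup>2 * a" if "0 \<le> t" for t
  proof -
    have "dist g p \<le> dist g (t *\<^sub>R p)"
      using assms(1) mem_cone[OF assms(3) \<open>p \<in> C\<close> that] unfolding p_def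
      by (rule closest_point_le)
    then have "(norm (g - p))\<^sup>2 \<le> (norm (g - t *\<^sub>R p))\<^sup>2" by (simp add: dist_norm power_mono)
    then show ?thesis
      unfolding power2_norm_eq_inner a_def b_def
      by (simp add: inner_diff_left inner_diff_right inner_commute power2_eq_square algebra_simps)
  qed
  have "0 < a" using \<open>b < a\<close> ray[of 0] by simp
  show False
  proof (cases "b \<le> 0")
    case True
    with ray[of 0] \<open>0 < a\<close> show False by simp
  next
    case False
    have "- 2 * b + a \<le> - 2 * (b / a) * b + (b / a)\<^sup>2 * a" using ray[of "b / a"] False \<open>0 < a\<close> by simp
    then have "(a - b)\<^sup>2 \<le> 0" using \<open>0 < a\<close> by (simp add: power2_eq_square field_simps)
    with \<open>b < a\<close> show False by simp
  qed
qed

lemma norm_closest_point_cone_le: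
  fixes C :: "'a::{real_inner,heine_borel} set" and g :: 'a
  assumes "closed C" "C \<noteq> {}" "cone C" and polar: "\<And>y. y \<in> C \<Longrightarrow> s \<bullet> y \<le> 0"
  shows "norm (closest_point C g) \<le> norm (g - s)"
proof -
  define p where "p = closest_point C g"
  have "p \<in> C" unfolding p_def using assms(1,2) by (rule closest_point_in_set)
  have "(norm p)\<^sup>2 \<le> p \<bullet> (g - s)"
    using closest_point_cone_inner_le[OF assms(1-3), of g] polar[OF \<open>p \<in> C\<close>]
    by (simp add: p_def power2_norm_eq_inner inner_diff_right inner_commute)
  also have "\<dots> \<le> norm p * norm (g - s)" by (rule order_trans[OF abs_ge_self Cauchy_Schwarz_ineq2])
  finally have "norm p * norm p \<le> norm p * norm (g - s)" by (simp add: power2_eq_square)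
  then show ?thesis unfolding p_def[symmetric] by (cases "norm p = 0") auto
qed

definition signed_indicator :: "'n::finite set \<Rightarrow> 'n set \<Rightarrow> real^'n" where
  "signed_indicator K1 Km1 = (\<chi> i. indicator K1 i - indicator Km1 i)"

text \<open>For \<tau> > 0 this is \<tau> times the subdifferential at the signed indicator; for \<tau> = 0 it is
  the normal cone of the box there, which is not a multiple of the subdifferential.\<close>
definition sign_constraints :: "'n::finite set \<Rightarrow> 'n set \<Rightarrow> real \<Rightarrow> (real^'n) set" where
  "sign_constraints K1 Km1 \<tau> =
     {s. (\<forall>i\<in>K1. s $ i \<ge> \<tau>) \<and> (\<forall>i\<in>Km1. s $ i \<le> -\<tau>) \<and> (\<forall>i. i \<notin> K1 \<union> Km1 \<longrightarrow> \<bar>s $ i\<bar> \<le> \<tau>)}"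

lemma signed_indicator_nth:
  assumes "K1 \<inter> Km1 = {}"
  shows "signed_indicator K1 Km1 $ i = (if i \<in> K1 then 1 else if i \<in> Km1 then -1 else 0)"
  using assms by (auto simp: signed_indicator_def indicator_def)

lemma l1_box_finite:
  assumes "\<forall>i. \<bar>x $ i\<bar> \<le> 1"
  shows "l1_box x = ereal (\<Sum>i\<in>UNIV. \<bar>x $ i\<bar>)"
  using assms by (simp add: l1_box_def)

lemma sign_constraints_inner_diff_le:
  fixes K1 Km1 :: "'n::finite set"
  assumes "K1 \<inter> Km1 = {}" "s \<in> sign_constraints K1 Km1 \<tau>" "0 \<le> \<tau>" "\<forall>i. \<bar>z $ i\<bar> \<le> 1"
  defines "x \<equiv> signed_indicator K1 Km1"
  shows "s \<bullet> (z - x) \<le> \<tau> * ((\<Sum>i\<in>UNIV. \<bar>z $ i\<bar>) - (\<Sum>i\<in>UNIV. \<bar>x $ i\<bar>))"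
proof -
  have coord: "s $ i * (z $ i - x $ i) \<le> \<tau> * (\<bar>z $ i\<bar> - \<bar>x $ i\<bar>)" for i
  proof -
    have z: "\<bar>z $ i\<bar> \<le> 1" using assms(4) by simp
    consider "i \<in> K1" | "i \<in> Km1" | "i \<notin> K1 \<union> Km1" by blast
    then show ?thesis
    proof cases
      case 1
      then have "\<tau> \<le> s $ i" "x $ i = 1" using assms(1,2) by (auto simp: x_def signed_indicator_nth sign_constraints_def)
      moreover have "z $ i - 1 \<le> 0" using z by simp
      ultimately have "s $ i * (z $ i - x $ i) \<le> \<tau> * (z $ i - x $ i)"
        using mult_right_mono_neg[of \<tau> "s $ i" "z $ i - x $ i"] by simp
      also have "\<dots> \<le> \<tau> * (\<bar>z $ i\<bar> - \<bar>x $ i\<bar>)" using \<open>x $ i = 1\<close> assms(3) by (simp add: mult_left_mono)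
      finally show ?thesis .
    next
      case 2
      then have "s $ i \<le> -\<tau>" "x $ i = -1" using assms(1,2) by (auto simp: x_def signed_indicator_nth sign_constraints_def)
      moreover have "0 \<le> z $ i + 1" using z by simp
      ultimately have "s $ i * (z $ i - x $ i) \<le> -\<tau> * (z $ i - x $ i)"
        using mult_right_mono[of "s $ i" "-\<tau>" "z $ i - x $ i"] by simp
      also have "\<dots> \<le> \<tau> * (\<bar>z $ i\<bar> - \<bar>x $ i\<bar>)"
        using mult_left_mono[of "- (z $ i - x $ i)" "\<bar>z $ i\<bar> - \<bar>x $ i\<bar>" \<tau>] \<open>x $ i = -1\<close> assms(3) by (auto simp: algebra_simps)
      finally show ?thesis .
    next
      case 3
      then have "\<bar>s $ i\<bar> \<le> \<tau>" "x $ i = 0" using assms(1,2) by (auto simp: x_def signed_indicator_nth sign_constraints_def)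
      have "s $ i * z $ i \<le> \<bar>s $ i\<bar> * \<bar>z $ i\<bar>" by (simp add: abs_mult[symmetric])
      also have "\<dots> \<le> \<tau> * \<bar>z $ i\<bar>" using \<open>\<bar>s $ i\<bar> \<le> \<tau>\<close> by (simp add: mult_right_mono)
      finally show ?thesis using \<open>x $ i = 0\<close> by simp
    qed
  qed
  have "s \<bullet> (z - x) \<le> (\<Sum>i\<in>UNIV. \<tau> * (\<bar>z $ i\<bar> - \<bar>x $ i\<bar>))"
    unfolding inner_vec_def by (rule sum_mono) (simp add: coord)
  then show ?thesis by (simp add: sum_distrib_left sum_subtractf right_diff_distrib)
qed

lemma subgradient_l1_box_coord_le:
  assumes box: "\<forall>j. \<bar>x $ j\<bar> \<le> 1" and s: "s \<in> subdifferential l1_box x" and c: "\<bar>x $ i + c\<bar> \<le> 1"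
  shows "c * s $ i \<le> \<bar>x $ i + c\<bar> - \<bar>x $ i\<bar>"
proof -
  define y where "y = x + c *\<^sub>R axis i 1"
  have y: "y $ j = x $ j + (if j = i then c else 0)" for j by (simp add: y_def axis_def)
  have "(\<Sum>j\<in>UNIV. \<bar>y $ j\<bar>) - (\<Sum>j\<in>UNIV. \<bar>x $ j\<bar>) = (\<Sum>j\<in>UNIV. if j = i then \<bar>x $ i + c\<bar> - \<bar>x $ i\<bar> else 0)"
    unfolding sum_subtractf[symmetric] by (rule sum.cong) (auto simp: y)
  then have "l1_box y - l1_box x = ereal (\<bar>x $ i + c\<bar> - \<bar>x $ i\<bar>)"
    using box c l1_box_finite[OF box] l1_box_finite[of y] by (simp add: y)
  moreover have "ereal (s \<bullet> (y - x)) \<le> l1_box y - l1_box x" using s by (simp add: subdifferential_def)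
  moreover have "s \<bullet> (y - x) = c * s $ i" by (simp add: y_def inner_axis)
  ultimately show ?thesis by simp
qed

lemma subdifferential_l1_box_signed_indicator:
  fixes K1 Km1 :: "'n::finite set"
  assumes "K1 \<inter> Km1 = {}"
  shows "subdifferential l1_box (signed_indicator K1 Km1) = sign_constraints K1 Km1 1"
proof -
  define x where "x = signed_indicator K1 Km1"
  have box: "\<forall>j. \<bar>x $ j\<bar> \<le> 1" by (simp add: x_def signed_indicator_nth[OF assms])
  have "s \<in> sign_constraints K1 Km1 1" if s: "s \<in> subdifferential l1_box x" for s
  proof -
    note test = subgradient_l1_box_coord_le[OF box s]
    show ?thesis
      unfolding sign_constraints_def
    proof (intro CollectI conjI ballI allI impI)
      fix i assume "i \<in> K1"
      then show "1 \<le> s $ i" using test[of i "-1"] by (simp add: x_def signed_indicator_nth[OF assms])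
    next
      fix i assume "i \<in> Km1"
      moreover from this have "i \<notin> K1" using assms by blast
      ultimately show "s $ i \<le> -1" using test[of i 1] by (simp add: x_def signed_indicator_nth[OF assms])
    next
      fix i assume "i \<notin> K1 \<union> Km1"
      then show "\<bar>s $ i\<bar> \<le> 1" using test[of i 1] test[of i "-1"] by (simp add: x_def signed_indicator_nth[OF assms])
    qed
  qed
  moreover have "s \<in> subdifferential l1_box x" if s: "s \<in> sign_constraints K1 Km1 1" for s
  proof -
    have "ereal (s \<bullet> (y - x)) \<le> l1_box y - l1_box x" for y
    proof (cases "\<forall>j. \<bar>y $ j\<bar> \<le> 1")
      case True
      then show ?thesis
        using sign_constraints_inner_diff_le[OF assms s _ True] l1_box_finite[OF box] l1_box_finite[OF True]
        by (simp add: x_def)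
    next
      case False
      then have "l1_box y = \<infinity>" by (simp add: l1_box_def)
      with l1_box_finite[OF box] show ?thesis by simp
    qed
    then show ?thesis by (simp add: subdifferential_def)
  qed
  ultimately show ?thesis unfolding x_def by blast
qed

lemma sign_constraints_polar_descent_cone:
  fixes K1 Km1 :: "'n::finite set"
  assumes "K1 \<inter> Km1 = {}" "s \<in> sign_constraints K1 Km1 \<tau>" "0 \<le> \<tau>"
    and "y \<in> closure (descent_cone l1_box (signed_indicator K1 Km1))"
  shows "s \<bullet> y \<le> 0"
proof (rule closure_descent_cone_polar[OF _ assms(4)])
  define x where "x = signed_indicator K1 Km1"
  have box: "\<forall>j. \<bar>x $ j\<bar> \<le> 1" by (simp add: x_def signed_indicator_nth[OF assms(1)])
  fix z :: "real^'n" assume le: "l1_box z \<le> l1_box (signed_indicator K1 Km1)"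
  then have zbox: "\<forall>j. \<bar>z $ j\<bar> \<le> 1"
    using l1_box_finite[OF box] by (auto simp: l1_box_def x_def split: if_splits)
  have "s \<bullet> (z - x) \<le> \<tau> * ((\<Sum>i\<in>UNIV. \<bar>z $ i\<bar>) - (\<Sum>i\<in>UNIV. \<bar>x $ i\<bar>))"
    unfolding x_def by (rule sign_constraints_inner_diff_le[OF assms(1-3) zbox])
  also have "\<dots> \<le> 0"
    using le l1_box_finite[OF box] l1_box_finite[OF zbox] assms(3) by (simp add: x_def mult_nonneg_nonpos)
  finally show "s \<bullet> (z - signed_indicator K1 Km1) \<le> 0" by (simp add: x_def)
qed

definition sign_clamp :: "'n::finite set \<Rightarrow> 'n set \<Rightarrow> real \<Rightarrow> real^'n \<Rightarrow> real^'n" where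
  "sign_clamp K1 Km1 \<tau> g = (\<chi> i. if i \<in> K1 then max (g $ i) \<tau> else if i \<in> Km1 then min (g $ i) (-\<tau>)
                                  else max (-\<tau>) (min (g $ i) \<tau>))"

lemma sign_clamp_in_sign_constraints:
  assumes "K1 \<inter> Km1 = {}" "0 \<le> \<tau>"
  shows "sign_clamp K1 Km1 \<tau> g \<in> sign_constraints K1 Km1 \<tau>"
  using assms by (auto simp: sign_clamp_def sign_constraints_def)

definition shortfall_sq :: "real \<Rightarrow> real \<Rightarrow> real" where
  "shortfall_sq \<tau> u = (if u \<le> \<tau> then (u - \<tau>)\<^sup>2 else 0)"

definition excess_sq :: "real \<Rightarrow> real \<Rightarrow> real" where
  "excess_sq \<tau> u = (if \<tau> \<le> u then (u - \<tau>)\<^sup>2 else 0)"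

definition clamp_error :: "'n set \<Rightarrow> 'n set \<Rightarrow> real \<Rightarrow> 'n \<Rightarrow> real \<Rightarrow> real" where
  "clamp_error K1 Km1 \<tau> i u =
     (if i \<in> K1 then shortfall_sq \<tau> u else if i \<in> Km1 then shortfall_sq \<tau> (-u)
      else excess_sq \<tau> u + excess_sq \<tau> (-u))"

lemma shortfall_sq_nonneg: "0 \<le> shortfall_sq \<tau> u"
  by (simp add: shortfall_sq_def)

lemma excess_sq_nonneg: "0 \<le> excess_sq \<tau> u"
  by (simp add: excess_sq_def)

lemma clamp_error_nonneg: "0 \<le> clamp_error K1 Km1 \<tau> i u"
  by (simp add: clamp_error_def shortfall_sq_nonneg excess_sq_nonneg)

lemma borel_measurable_shortfall_sq [measurable]: "shortfall_sq \<tau> \<in> borel_measurable borel"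
  unfolding shortfall_sq_def[abs_def] by measurable

lemma borel_measurable_excess_sq [measurable]: "excess_sq \<tau> \<in> borel_measurable borel"
  unfolding excess_sq_def[abs_def] by measurable

lemma borel_measurable_clamp_error [measurable]: "clamp_error K1 Km1 \<tau> i \<in> borel_measurable borel"
  unfolding clamp_error_def[abs_def] by measurable

lemma norm_diff_sign_clamp:
  assumes "0 \<le> \<tau>"
  shows "(norm (g - sign_clamp K1 Km1 \<tau> g))\<^sup>2 = (\<Sum>i\<in>UNIV. clamp_error K1 Km1 \<tau> i (g $ i))"
  unfolding power2_norm_eq_inner inner_vec_def
  by (rule sum.cong)
     (use assms in \<open>auto simp: sign_clamp_def clamp_error_def shortfall_sq_def excess_sq_def
                              max_def min_def power2_eq_square algebra_simps\<close>)

definition lower_sq_moment :: "real \<Rightarrow> real" where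
  "lower_sq_moment \<tau> = (LBINT u:{..\<tau>}. (u - \<tau>)\<^sup>2 * std_normal_density u)"

definition upper_sq_moment :: "real \<Rightarrow> real" where
  "upper_sq_moment \<tau> = (LBINT u:{\<tau>..}. (u - \<tau>)\<^sup>2 * std_normal_density u)"

lemma integrable_std_normal_shifted_sq:
  "integrable lborel (\<lambda>u. std_normal_density u * (u - \<tau>)\<^sup>2)"
proof -
  have "std_normal_density u * (u - \<tau>)\<^sup>2
      = std_normal_density u * u ^ 2 - 2 * \<tau> * (std_normal_density u * u ^ 1) + \<tau>\<^sup>2 * std_normal_density u" for u
    by (simp add: power2_eq_square algebra_simps)
  then show ?thesis
    by (simp only:)
       (intro Bochner_Integration.integrable_diff Bochner_Integration.integrable_add
          integrable_mult_right integrable_std_normal_moment integrable_normal_density; simp)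
qed

lemma lower_sq_moment_eq: "lower_sq_moment \<tau> = (\<integral>u. std_normal_density u * shortfall_sq \<tau> u \<partial>lborel)"
  unfolding lower_sq_moment_def set_lebesgue_integral_def
  by (rule Bochner_Integration.integral_cong) (auto simp: shortfall_sq_def indicator_def)

lemma upper_sq_moment_eq: "upper_sq_moment \<tau> = (\<integral>u. std_normal_density u * excess_sq \<tau> u \<partial>lborel)"
  unfolding upper_sq_moment_def set_lebesgue_integral_def
  by (rule Bochner_Integration.integral_cong) (auto simp: excess_sq_def indicator_def)

lemma lower_sq_moment_nonneg: "0 \<le> lower_sq_moment \<tau>"
  unfolding lower_sq_moment_eq by (simp add: shortfall_sq_nonneg)

lemma upper_sq_moment_nonneg: "0 \<le> upper_sq_moment \<tau>"
  unfolding upper_sq_moment_eq by (simp add: excess_sq_nonneg)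

lemma nn_integral_std_normal_shortfall_sq:
  "(\<integral>\<^sup>+u. ennreal (std_normal_density u * shortfall_sq \<tau> u) \<partial>lborel) = ennreal (lower_sq_moment \<tau>)"
  unfolding lower_sq_moment_eq
  by (rule nn_integral_eq_integral,
      rule Bochner_Integration.integrable_bound[OF integrable_std_normal_shifted_sq[of \<tau>]])
     (auto simp: shortfall_sq_def)

lemma nn_integral_std_normal_excess_sq:
  "(\<integral>\<^sup>+u. ennreal (std_normal_density u * excess_sq \<tau> u) \<partial>lborel) = ennreal (upper_sq_moment \<tau>)"
  unfolding upper_sq_moment_eq
  by (rule nn_integral_eq_integral,
      rule Bochner_Integration.integrable_bound[OF integrable_std_normal_shifted_sq[of \<tau>]])
     (auto simp: excess_sq_def)

lemma nn_integral_std_normal_reflect: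
  assumes [measurable]: "h \<in> borel_measurable borel"
  shows "(\<integral>\<^sup>+u. ennreal (std_normal_density u * h (- u)) \<partial>lborel)
       = (\<integral>\<^sup>+u. ennreal (std_normal_density u * h u) \<partial>lborel)"
  using nn_integral_real_affine[of "\<lambda>u. ennreal (std_normal_density u * h u)" "-1" 0]
  by (simp add: normal_density_def)

lemma nn_integral_lborel_vec_prod:
  fixes f :: "'n::finite \<Rightarrow> real \<Rightarrow> ennreal"
  assumes [measurable]: "\<And>j. f j \<in> borel_measurable borel"
  shows "(\<integral>\<^sup>+x. (\<Prod>j\<in>UNIV. f j (x $ j)) \<partial>(lborel :: (real^'n) measure)) = (\<Prod>j\<in>UNIV. \<integral>\<^sup>+u. f j u \<partial>lborel)"
proof -
  have Basis: "(Basis :: (real^'n) set) = (\<lambda>j. axis j 1) ` UNIV" by (auto simp: Basis_vec_def)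
  have inj: "inj (\<lambda>j::'n. axis j (1::real))" by (auto simp: inj_def axis_eq_axis)
  define F where "F b = f (inv (\<lambda>j. axis j (1::real)) b)" for b :: "real^'n"
  have F_axis: "F (axis j 1) = f j" for j
    unfolding F_def by (simp add: inv_f_f[OF inj])
  have "(\<integral>\<^sup>+x. (\<Prod>b\<in>Basis. F b (x \<bullet> b)) \<partial>(lborel :: (real^'n) measure)) = (\<Prod>b\<in>Basis. \<integral>\<^sup>+u. F b u \<partial>lborel)"
    by (rule nn_integral_lborel_prod) (auto simp: Basis F_axis)
  then show ?thesis by (simp add: Basis prod.reindex[OF inj] F_axis inner_axis)
qed

lemma nn_integral_std_normal_vec_coord:
  fixes i :: "'n::finite"
  assumes [measurable]: "h \<in> borel_measurable borel" and "\<And>u. 0 \<le> h u"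
  shows "(\<integral>\<^sup>+x. ennreal ((\<Prod>j\<in>UNIV. std_normal_density (x $ j)) * h (x $ i)) \<partial>(lborel :: (real^'n) measure))
       = (\<integral>\<^sup>+u. ennreal (std_normal_density u * h u) \<partial>lborel)"
proof -
  define f where "f j u = ennreal (if j = i then std_normal_density u * h u else std_normal_density u)" for j u
  have [measurable]: "f j \<in> borel_measurable borel" for j unfolding f_def by measurable
  have "(\<Prod>j\<in>UNIV. std_normal_density (x $ j)) * h (x $ i)
      = (\<Prod>j\<in>UNIV. if j = i then std_normal_density (x $ j) * h (x $ j) else std_normal_density (x $ j))"
    for x :: "real^'n"
    by (simp add: prod.If_cases Int_absorb1 prod.remove[of UNIV i] Compl_eq_Diff_UNIV mult_ac)
  then have "ennreal ((\<Prod>j\<in>UNIV. std_normal_density (x $ j)) * h (x $ i)) = (\<Prod>j\<in>UNIV. f j (x $ j))"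
    for x :: "real^'n"
    unfolding f_def using assms(2) by (simp add: prod_ennreal)
  moreover have "(\<integral>\<^sup>+u. f j u \<partial>lborel) = (if j = i then \<integral>\<^sup>+u. ennreal (std_normal_density u * h u) \<partial>lborel else 1)"
    for j
    by (simp add: f_def nn_integral_eq_integral)
  ultimately show ?thesis by (simp add: nn_integral_lborel_vec_prod prod.If_cases)
qed

lemma nn_integral_std_normal_vec_sum:
  assumes [measurable]: "\<And>i. h i \<in> borel_measurable borel" and nonneg: "\<And>i u. 0 \<le> h i u"
  shows "(\<integral>\<^sup>+x. ennreal ((\<Prod>j\<in>UNIV. std_normal_density (x $ j)) * (\<Sum>i\<in>UNIV. h i (x $ i))) \<partial>(lborel :: (real^'n::finite) measure))
       = (\<Sum>i\<in>UNIV. \<integral>\<^sup>+u. ennreal (std_normal_density u * h i u) \<partial>lborel)"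
proof -
  have "(\<integral>\<^sup>+x. ennreal ((\<Prod>j\<in>UNIV. std_normal_density (x $ j)) * (\<Sum>i\<in>UNIV. h i (x $ i))) \<partial>(lborel :: (real^'n) measure))
      = (\<integral>\<^sup>+x. (\<Sum>i\<in>UNIV. ennreal ((\<Prod>j\<in>UNIV. std_normal_density (x $ j)) * h i (x $ i))) \<partial>lborel)"
    by (rule nn_integral_cong)
       (subst sum_ennreal, auto simp: sum_distrib_left intro!: mult_nonneg_nonneg prod_nonneg nonneg)
  also have "\<dots> = (\<Sum>i\<in>UNIV. \<integral>\<^sup>+x. ennreal ((\<Prod>j\<in>UNIV. std_normal_density (x $ j)) * h i (x $ i)) \<partial>lborel)"
    by (rule nn_integral_sum) measurable
  finally show ?thesis by (simp add: nn_integral_std_normal_vec_coord nonneg)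
qed

lemma nn_integral_std_normal_clamp_error:
  fixes K1 Km1 :: "'n::finite set"
  shows "(\<Sum>i\<in>UNIV. \<integral>\<^sup>+u. ennreal (std_normal_density u * clamp_error K1 Km1 \<tau> i u) \<partial>lborel)
     = ennreal (real (card (K1 \<union> Km1)) * lower_sq_moment \<tau>
                + 2 * (real CARD('n) - real (card (K1 \<union> Km1))) * upper_sq_moment \<tau>)"
proof -
  have coord: "(\<integral>\<^sup>+u. ennreal (std_normal_density u * clamp_error K1 Km1 \<tau> i u) \<partial>lborel)
      = ennreal (if i \<in> K1 \<union> Km1 then lower_sq_moment \<tau> else 2 * upper_sq_moment \<tau>)" for i
  proof (cases "i \<in> K1 \<union> Km1")
    case True
    then show ?thesis
      by (cases "i \<in> K1")
         (auto simp: clamp_error_def nn_integral_std_normal_shortfall_sq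
                     nn_integral_std_normal_reflect[of "shortfall_sq \<tau>"])
  next
    case False
    have "(\<integral>\<^sup>+u. ennreal (std_normal_density u * (excess_sq \<tau> u + excess_sq \<tau> (- u))) \<partial>lborel)
        = (\<integral>\<^sup>+u. ennreal (std_normal_density u * excess_sq \<tau> u)
                  + ennreal (std_normal_density u * excess_sq \<tau> (- u)) \<partial>lborel)"
      by (rule nn_integral_cong)
         (simp add: distrib_left excess_sq_nonneg ennreal_plus[symmetric] del: ennreal_plus)
    also have "\<dots> = ennreal (2 * upper_sq_moment \<tau>)"
      by (simp add: nn_integral_add nn_integral_std_normal_reflect nn_integral_std_normal_excess_sq
                    upper_sq_moment_nonneg ennreal_plus[symmetric] del: ennreal_plus)
    finally show ?thesis using False by (simp add: clamp_error_def)
  qed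
  have "card (- (K1 \<union> Km1)) = CARD('n) - card (K1 \<union> Km1)"
    by (simp add: Compl_eq_Diff_UNIV card_Diff_subset)
  moreover have "card (K1 \<union> Km1) \<le> CARD('n)" by (rule card_mono) auto
  moreover have "{i. i \<in> K1 \<or> i \<in> Km1} = K1 \<union> Km1" by auto
  ultimately show ?thesis
    by (simp add: coord sum_ennreal lower_sq_moment_nonneg upper_sq_moment_nonneg
                  sum.If_cases of_nat_diff algebra_simps)
qed

lemma stat_dim_closure_descent_cone_le:
  fixes K1 Km1 :: "'n::finite set"
  assumes "K1 \<inter> Km1 = {}" "0 \<le> \<tau>"
  defines "k \<equiv> card (K1 \<union> Km1)"
  shows "stat_dim (closure (descent_cone l1_box (signed_indicator K1 Km1)))
           \<le> real k * lower_sq_moment \<tau> + 2 * (real CARD('n) - real k) * upper_sq_moment \<tau>"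
proof -
  define C where "C = closure (descent_cone l1_box (signed_indicator K1 Km1))"
  have C: "closed C" "C \<noteq> {}" "cone C"
    unfolding C_def using closure_subset zero_in_descent_cone cone_closure[OF cone_descent_cone]
    by blast+
  have pointwise: "(norm (closest_point C g))\<^sup>2 \<le> (\<Sum>i\<in>UNIV. clamp_error K1 Km1 \<tau> i (g $ i))" for g
  proof -
    have "norm (closest_point C g) \<le> norm (g - sign_clamp K1 Km1 \<tau> g)"
      using C sign_constraints_polar_descent_cone[OF assms(1) sign_clamp_in_sign_constraints[OF assms(1,2)] assms(2)]
      by (rule norm_closest_point_cone_le) (simp add: C_def)
    then show ?thesis by (simp add: power_mono norm_diff_sign_clamp[OF assms(2), symmetric])
  qed
  have "k \<le> CARD('n)" unfolding k_def by (rule card_mono) auto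
  then have bound_nonneg: "0 \<le> real k * lower_sq_moment \<tau> + 2 * (real CARD('n) - real k) * upper_sq_moment \<tau>"
    by (simp add: lower_sq_moment_nonneg upper_sq_moment_nonneg)
  have "(\<integral>\<^sup>+g. ennreal ((\<Prod>i\<in>UNIV. std_normal_density (g $ i)) * (norm (closest_point C g))\<^sup>2) \<partial>lborel)
      \<le> (\<integral>\<^sup>+g. ennreal ((\<Prod>j\<in>UNIV. std_normal_density (g $ j)) * (\<Sum>i\<in>UNIV. clamp_error K1 Km1 \<tau> i (g $ i))) \<partial>lborel)"
    by (rule nn_integral_mono) (auto intro!: ennreal_leI mult_left_mono pointwise prod_nonneg)
  also have "\<dots> = ennreal (real k * lower_sq_moment \<tau> + 2 * (real CARD('n) - real k) * upper_sq_moment \<tau>)"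
    by (simp add: nn_integral_std_normal_vec_sum clamp_error_nonneg nn_integral_std_normal_clamp_error k_def)
  finally show ?thesis
    unfolding stat_dim_def C_def[symmetric] by (rule integral_real_bounded[OF bound_nonneg])
qed

theorem theorem3p4:
  fixes K1 Km1 :: "'n::finite set"
  assumes "K1 \<inter> Km1 = {}"
  defines "x \<equiv> (\<chi> i. indicator K1 i - indicator Km1 i) :: real^'n"
  defines "k \<equiv> card (K1 \<union> Km1)"
  shows "subdifferential l1_box x =
           {s. (\<forall>i\<in>K1. s $ i \<ge> 1) \<and> (\<forall>i\<in>Km1. s $ i \<le> -1)
               \<and> (\<forall>i. i \<notin> K1 \<union> Km1 \<longrightarrow> \<bar>s $ i\<bar> \<le> 1)}
       \<and> stat_dim (closure (descent_cone l1_box x)) \<le> Delta_pm_ter CARD('n) k"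
proof
  have x: "x = signed_indicator K1 Km1" by (simp add: x_def signed_indicator_def)
  show "subdifferential l1_box x =
           {s. (\<forall>i\<in>K1. s $ i \<ge> 1) \<and> (\<forall>i\<in>Km1. s $ i \<le> -1)
               \<and> (\<forall>i. i \<notin> K1 \<union> Km1 \<longrightarrow> \<bar>s $ i\<bar> \<le> 1)}"
    unfolding x subdifferential_l1_box_signed_indicator[OF assms(1)] sign_constraints_def ..
  have "stat_dim (closure (descent_cone l1_box x))
          \<le> (INF \<tau>\<in>{0..}. real k * lower_sq_moment \<tau> + 2 * (real CARD('n) - real k) * upper_sq_moment \<tau>)"
    unfolding x k_def by (intro cINF_greatest stat_dim_closure_descent_cone_le[OF assms(1)]) auto
  then show "stat_dim (closure (descent_cone l1_box x)) \<le> Delta_pm_ter CARD('n) k"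
    unfolding Delta_pm_ter_def lower_sq_moment_def upper_sq_moment_def .
qed

end
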